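(* Let $L>0$, $g>0$, $\alpha^2>0$ and let $\mathbf G(x,y)=\frac{1}{4\pi}\log\left(\frac{\cos(x/L)-\cosh(y/L)}{\cos(x/L)-\cosh((y-2)/L)}\right)$ on $\mathbb{R}\times(-\infty,1)$. Let $c_1$ be the first component of $\nabla^\perp\bigl(\mathbf G-\Gamma\bigr)(0,0)$, and let \[ \eta_*=-(g-\alpha^2\partial_x^2)^{-1}\left(\chi-\frac{1}{2\pi L}\int_{-\pi L}^{\pi L}\chi\,dx\right),\qquad\chi(x)=c_1\mathbf G_y(x,1)+\tfrac12\mathbf G_y(x,1)^2. \] Then \[ c_1=-\frac{1}{4\pi L}\coth(1/L),\qquad \eta_*(x)=-\frac{1}{4\pi^2}\sum_{n=1}^\infty\frac{n}{gL^2+\alpha^2n^2}e^{-n/L}\cos(nx/L). \]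
   Context: $\Gamma(x,y)=\frac{1}{4\pi}\log(x^2+y^2)$ and $\nabla^\perp f=(-f_y,f_x)$; $\mathbf G-\Gamma$ extends harmonically to $(0,0)$. $(g-\alpha^2\partial_x^2)^{-1}$ acts on $2\pi L$-periodic mean-zero functions as the Fourier multiplier sending $\cos(nx/L)$ to $(g+\alpha^2n^2/L^2)^{-1}\cos(nx/L)$. Here $c_1$ and $\eta_*$ are the leading-order wave speed and surface profile of the small-amplitude $2\pi L$-periodic gravity-capillary waves on infinite depth with a point vortex at $(0,0)$ below the undisturbed surface $y=1$. *)

theory Defs
  imports "HOL-Analysis.Analysis"
begin

definition Gfun :: "real \<Rightarrow> real \<Rightarrow> real \<Rightarrow> real" where
  "Gfun L x y = 1 / (4 * pi) *
     ln ((cos (x / L) - cosh (y / L)) / (cos (x / L) - cosh ((y - 2) / L)))"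

definition Gamma_fun :: "real \<Rightarrow> real \<Rightarrow> real" where
  "Gamma_fun x y = 1 / (4 * pi) * ln (x\<^sup>2 + y\<^sup>2)"

definition is_regular_part :: "real \<Rightarrow> (real \<times> real \<Rightarrow> real) \<Rightarrow> bool" where
  "is_regular_part L H \<longleftrightarrow>
     H differentiable (at (0, 0)) \<and>
     (\<exists>e>0. \<forall>p. 0 < norm p \<and> norm p < e \<longrightarrow>
        H p = Gfun L (fst p) (snd p) - Gamma_fun (fst p) (snd p))"

text \<open>First component of the perpendicular gradient (-f_y, f_x) at (0,0).\<close>
definition perp_grad_first :: "(real \<times> real \<Rightarrow> real) \<Rightarrow> real" where
  "perp_grad_first H = - deriv (\<lambda>y. H (0, y)) 0"

definition Gy1 :: "real \<Rightarrow> real \<Rightarrow> real" where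
  "Gy1 L x = deriv (\<lambda>y. Gfun L x y) 1"

definition cos_coeff :: "real \<Rightarrow> (real \<Rightarrow> real) \<Rightarrow> nat \<Rightarrow> real" where
  "cos_coeff L f n = 1 / (pi * L) * integral {-pi*L..pi*L} (\<lambda>x. f x * cos (real n * x / L))"

definition sin_coeff :: "real \<Rightarrow> (real \<Rightarrow> real) \<Rightarrow> nat \<Rightarrow> real" where
  "sin_coeff L f n = 1 / (pi * L) * integral {-pi*L..pi*L} (\<lambda>x. f x * sin (real n * x / L))"

text \<open>(g - alpha^2 d_x^2)^{-1} on 2 pi L-periodic mean-zero functions, as the Fourier
  multiplier sending cos(nx/L) (and sin(nx/L)) to (g+alpha^2 n^2/L^2)^{-1} times itself.\<close>
definition inv_op :: "real \<Rightarrow> real \<Rightarrow> real \<Rightarrow> (real \<Rightarrow> real) \<Rightarrow> real \<Rightarrow> real" where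
  "inv_op L g \<alpha> f x =
     (\<Sum>n. if n = 0 then 0 else
        (cos_coeff L f n * cos (real n * x / L) + sin_coeff L f n * sin (real n * x / L))
        / (g + \<alpha>\<^sup>2 * (real n)\<^sup>2 / L\<^sup>2))"

definition chi_fun :: "real \<Rightarrow> real \<Rightarrow> real \<Rightarrow> real" where
  "chi_fun L c x = c * Gy1 L x + 1/2 * (Gy1 L x)\<^sup>2"

definition eta_star :: "real \<Rightarrow> real \<Rightarrow> real \<Rightarrow> real \<Rightarrow> real \<Rightarrow> real" where
  "eta_star L g \<alpha> c x =
     - inv_op L g \<alpha>
         (\<lambda>t. chi_fun L c t - 1 / (2 * pi * L) * integral {-pi*L..pi*L} (chi_fun L c)) x"

end

theory Submission
  imports Defs "HOL-Complex_Analysis.Complex_Analysis"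
begin

text \<open>
  Along the free surface the Green's function gives
  \<open>G\<^sub>y(x,1) = sinh (1/L) / (2\<pi>L (cosh (1/L) - cos (x/L)))\<close>, and for \<open>c = c\<^sub>1\<close> the forcing
  \<open>\<chi>\<close> collapses to \<open>(cosh a cos t - 1) / (8\<pi>\<^sup>2L\<^sup>2 (cosh a - cos t)\<^sup>2)\<close> with \<open>a = 1/L\<close>,
  \<open>t = x/L\<close>. Up to the factor \<open>4\<pi>\<^sup>2L\<^sup>2\<close> this is the real part of \<open>\<Sum> n w\<^sup>n = w/(1-w)\<^sup>2\<close> at
  \<open>w = exp (-a + it)\<close>, so \<open>\<chi>\<close> is an absolutely convergent cosine series without constant
  term; termwise integration identifies its Fourier coefficients and the multiplier then gives
  \<open>\<eta>\<^sub>*\<close>.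

  For \<open>c\<^sub>1\<close>: on the axis \<open>x = 0\<close>, \<open>G - \<Gamma>\<close> is an even function of \<open>y\<close> plus the image-vortex
  term \<open>ln (cosh ((y-2)/L) - 1) / (4\<pi>)\<close>, so only the latter contributes to the \<open>y\<close>-derivative
  at the origin. A regular part exists because \<open>cosh (y/L) - cos (x/L) = 2 \<bar>sin (z/(2L))\<bar>\<^sup>2\<close>
  for \<open>z = x + iy\<close>, and \<open>sin (z/(2L)) / z\<close> is entire and nonzero for \<open>\<bar>z\<bar> < 2\<pi>L\<close>.
\<close>

lemma cosh_gt_1:
  fixes x :: real
  assumes "x \<noteq> 0"
  shows "1 < cosh x"
  using cosh_real_strict_mono[of 0 "\<bar>x\<bar>"] assms by simp

lemma cosh_minus_cos_pos:
  fixes a t :: real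
  assumes "a \<noteq> 0"
  shows "0 < cosh a - cos t"
  using cosh_gt_1[OF assms] cos_le_one[of t] by linarith

lemma cosh_div_sinh_eq:
  fixes a :: real
  assumes "a \<noteq> 0"
  shows "cosh a / sinh a = sinh (2 * a) / (cosh (2 * a) - 1)"
proof -
  have "cosh (2 * a) - 1 = 2 * (sinh a)\<^sup>2"
    using cosh_double[of a] cosh_square_eq[of a] by simp
  then show ?thesis
    using assms by (simp add: sinh_double power2_eq_square)
qed

lemma norm_sin_Complex_squared:
  "(cmod (sin (Complex u v)))\<^sup>2 = (sin u)\<^sup>2 + (sinh v)\<^sup>2"
proof -
  have "(cmod (sin (Complex u v)))\<^sup>2 = (sin u * cosh v)\<^sup>2 + (cos u * sinh v)\<^sup>2"
    unfolding cmod_power2 Re_sin Im_sin cosh_def sinh_def by simp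
  also have "\<dots> = (sin u)\<^sup>2 + (sinh v)\<^sup>2"
    by (simp add: power_mult_distrib cosh_square_eq cos_squared_eq algebra_simps)
  finally show ?thesis .
qed

lemma cosh_minus_cos_eq_norm_sin:
  "cosh v - cos u = 2 * (cmod (sin (Complex (u / 2) (v / 2))))\<^sup>2"
proof -
  have "cos u = 1 - 2 * (sin (u / 2))\<^sup>2"
    using cos_double_sin[of "u / 2"] by simp
  moreover have "cosh v = 1 + 2 * (sinh (v / 2))\<^sup>2"
    using cosh_double[of "v / 2"] cosh_square_eq[of "v / 2"] by simp
  ultimately show ?thesis
    unfolding norm_sin_Complex_squared by simp
qed

lemma sin_div_removable:
  fixes c :: complex
  obtains h where "h holomorphic_on UNIV" "h 0 = c" "\<And>z. z \<noteq> 0 \<Longrightarrow> h z = sin (c * z) / z"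
proof
  let ?f = "\<lambda>z. sin (c * z)"
  show "(\<lambda>z. if z = 0 then deriv ?f 0 else (?f z - ?f 0) / (z - 0)) holomorphic_on UNIV"
    by (rule pole_lemma) (auto intro!: holomorphic_intros)
  have "DERIV ?f 0 :> cos (c * 0) * c"
    by (auto intro!: derivative_eq_intros)
  then show "(if (0::complex) = 0 then deriv ?f 0 else (?f 0 - ?f 0) / (0 - 0)) = c"
    by (simp add: DERIV_imp_deriv)
qed simp

lemma differentiable_ln_norm_squared_holomorphic:
  fixes h :: "complex \<Rightarrow> complex"
  assumes "h holomorphic_on UNIV" and "h 0 \<noteq> 0"
  shows "(\<lambda>p::real \<times> real. ln ((cmod (h (Complex (fst p) (snd p))))\<^sup>2)) differentiable (at (0, 0))"
proof -
  define c where "c p = Complex (fst p) (snd p)" for p :: "real \<times> real"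
  have c0: "c (0, 0) = 0" by (simp add: c_def zero_complex.code)
  have "h differentiable (at (c (0, 0)))"
    using assms(1) by (auto intro!: field_differentiable_imp_differentiable holomorphic_on_imp_differentiable_at)
  moreover have "bounded_linear c"
    by (rule bounded_linear_intro[where K = 1]) (auto simp: c_def complex_eq_iff cmod_def norm_Pair)
  ultimately have "(\<lambda>p. h (c p)) differentiable (at (0, 0))"
    by (rule differentiable_compose[OF _ bounded_linear_imp_differentiable])
  moreover have "norm differentiable (at (h (c (0, 0))))"
    using assms(2) by (simp add: c0)
  ultimately have "(\<lambda>p. (cmod (h (c p)))\<^sup>2) differentiable (at (0, 0))"
    by (intro differentiable_power) (rule differentiable_compose[where f = norm])
  moreover have "ln differentiable (at ((cmod (h (c (0, 0))))\<^sup>2))"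
    using DERIV_ln_divide[of "(cmod (h 0))\<^sup>2"] assms(2)
    by (auto simp: c0 has_field_derivative_def intro: differentiableI)
  ultimately show ?thesis
    unfolding c_def[symmetric] by (rule differentiable_compose[where f = ln, rotated])
qed

lemma DERIV_even_eq_0:
  fixes f :: "real \<Rightarrow> real"
  assumes f: "DERIV f 0 :> D" and "e > 0" and even: "\<And>y. \<bar>y\<bar> < e \<Longrightarrow> f (- y) = f y"
  shows "D = 0"
proof -
  have "DERIV f (- 0) :> D" using f by simp
  from DERIV_chain2[OF this DERIV_minus[OF DERIV_ident]]
  have "DERIV (\<lambda>y. f (- y)) 0 :> D * (- 1)" .
  then have "DERIV f 0 :> D * (- 1)"
    by (rule has_field_derivative_transform_within[OF _ \<open>e > 0\<close>]) (auto simp: dist_real_def even)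
  with f have "D = D * (- 1)"
    by (rule DERIV_unique)
  then show "D = 0" by simp
qed

lemma Re_rcis_div_one_minus_squared:
  fixes a t :: real
  assumes "a > 0"
  shows "Re (rcis (exp (-a)) t / (1 - rcis (exp (-a)) t)\<^sup>2)
       = (cosh a * cos t - 1) / (2 * (cosh a - cos t)\<^sup>2)"
proof -
  define w where "w = rcis (exp (-a)) t"
  define u v where "u = cosh a * cos t - 1" and "v = sinh a * sin t"
  have "w \<noteq> 0" "w \<noteq> 1"
    using assms by (auto simp: w_def dest: arg_cong[of _ _ cmod])
  then have "w / (1 - w)\<^sup>2 = 1 / (inverse w + w - 2)"
    by (simp add: field_simps power2_eq_square)
  also have "inverse w + w - 2 = Complex (2 * u) (- 2 * v)"
  proof -
    have "inverse w = rcis (exp a) (- t)"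
      by (simp add: w_def rcis_inverse exp_minus divide_inverse)
    then show ?thesis
      by (simp add: w_def u_def v_def complex_eq_iff cosh_def sinh_def exp_minus field_simps)
  qed
  finally have "Re (w / (1 - w)\<^sup>2) = 2 * u / (2 * (2 * (u\<^sup>2 + v\<^sup>2)))"
    by (simp add: Re_divide power2_eq_square algebra_simps)
  moreover have "u\<^sup>2 + v\<^sup>2 = (cosh a - cos t)\<^sup>2"
  proof -
    have "v\<^sup>2 = ((cosh a)\<^sup>2 - 1) * (1 - (cos t)\<^sup>2)"
      by (simp add: v_def power_mult_distrib cosh_square_eq sin_squared_eq)
    then show ?thesis by (simp add: u_def power2_eq_square algebra_simps)
  qed
  ultimately show ?thesis
    by (simp only: mult_divide_mult_cancel_left_if) (simp add: w_def u_def)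
qed

lemma sums_nat_exp_cos:
  fixes a t :: real
  assumes "a > 0"
  shows "(\<lambda>n. real n * exp (- real n * a) * cos (real n * t)) sums
           ((cosh a * cos t - 1) / (2 * (cosh a - cos t)\<^sup>2))"
proof -
  define w where "w = rcis (exp (-a)) t"
  have "norm w < 1" using assms by (simp add: w_def)
  then have "(\<lambda>n. w * (of_nat (Suc n) * w ^ n)) sums (w * (1 / (1 - w)\<^sup>2))"
    by (intro sums_mult geometric_deriv_sums)
  then have "(\<lambda>n. of_nat (Suc n) * w ^ Suc n) sums (w / (1 - w)\<^sup>2)"
    by (simp add: algebra_simps)
  then have "(\<lambda>n. of_nat n * w ^ n) sums (w / (1 - w)\<^sup>2)"
    using sums_Suc_iff[of "\<lambda>n. of_nat n * w ^ n"] by simp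
  then have "(\<lambda>n. Re (of_nat n * w ^ n)) sums Re (w / (1 - w)\<^sup>2)"
    by (simp only: sums_complex_iff)
  moreover have "(\<lambda>n. Re (of_nat n * w ^ n)) = (\<lambda>n. real n * exp (- real n * a) * cos (real n * t))"
    by (simp add: fun_eq_iff w_def DeMoivre2 exp_of_nat_mult[symmetric] mult.commute)
  ultimately show ?thesis
    unfolding w_def Re_rcis_div_one_minus_squared[OF assms] by simp
qed

lemma has_integral_cos_int_multiple:
  fixes L :: real and k :: int
  assumes L: "L > 0"
  shows "((\<lambda>x. cos (of_int k * x / L)) has_integral (if k = 0 then 2 * pi * L else 0)) {-pi*L..pi*L}"
proof (cases "k = 0")
  case True
  then show ?thesis
    using has_integral_const_real[of "1::real" "-pi*L" "pi*L"] L by (simp add: mult_ac)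
next
  case False
  let ?F = "\<lambda>x. L / of_int k * sin (of_int k * x / L)"
  have "((\<lambda>x. cos (of_int k * x / L)) has_integral (?F (pi*L) - ?F (-pi*L))) {-pi*L..pi*L}"
  proof (rule fundamental_theorem_of_calculus)
    show "-pi*L \<le> pi*L" using L by simp
    fix x
    show "(?F has_vector_derivative cos (of_int k * x / L)) (at x within {-pi*L..pi*L})"
      unfolding has_real_derivative_iff_has_vector_derivative[symmetric]
      using L False by (auto intro!: derivative_eq_intros simp: field_simps)
  qed
  moreover have "sin (of_int k * (pi*L) / L) = 0" "sin (of_int k * (-pi*L) / L) = 0"
    using L by (simp_all add: mult.commute[of _ pi])
  ultimately show ?thesis using False by simp
qed

lemma has_integral_sin_int_multiple:
  fixes L :: real and k :: int
  assumes L: "L > 0"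
  shows "((\<lambda>x. sin (of_int k * x / L)) has_integral 0) {-pi*L..pi*L}"
proof (cases "k = 0")
  case False
  let ?F = "\<lambda>x. - L / of_int k * cos (of_int k * x / L)"
  have "((\<lambda>x. sin (of_int k * x / L)) has_integral (?F (pi*L) - ?F (-pi*L))) {-pi*L..pi*L}"
  proof (rule fundamental_theorem_of_calculus)
    show "-pi*L \<le> pi*L" using L by simp
    fix x
    show "(?F has_vector_derivative sin (of_int k * x / L)) (at x within {-pi*L..pi*L})"
      unfolding has_real_derivative_iff_has_vector_derivative[symmetric]
      using L False by (auto intro!: derivative_eq_intros simp: field_simps)
  qed
  moreover have "cos (of_int k * (-pi*L) / L) = cos (of_int k * (pi*L) / L)"
    using cos_minus[of "of_int k * (pi*L) / L"] by simp
  ultimately show ?thesis by simp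
qed simp

lemma integral_cos_times_cos:
  fixes L :: real and n m :: nat
  assumes L: "L > 0" and "m \<ge> 1"
  shows "integral {-pi*L..pi*L} (\<lambda>x. cos (real n * x / L) * cos (real m * x / L))
       = (if n = m then pi * L else 0)"
proof -
  have "cos (real n * x / L) * cos (real m * x / L) =
      cos (of_int (int n - int m) * x / L) / 2 + cos (of_int (int n + int m) * x / L) / 2" for x
    unfolding cos_times_cos by (simp add: diff_divide_distrib add_divide_distrib algebra_simps)
  moreover have "((\<lambda>x. cos (of_int (int n - int m) * x / L) / 2 + cos (of_int (int n + int m) * x / L) / 2)
     has_integral ((if int n - int m = 0 then 2 * pi * L else 0) / 2
                   + (if int n + int m = 0 then 2 * pi * L else 0) / 2)) {-pi*L..pi*L}"
    by (intro has_integral_add has_integral_divide has_integral_cos_int_multiple L)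
  moreover have "int n + int m \<noteq> 0" "(int n - int m = 0) = (n = m)"
    using \<open>m \<ge> 1\<close> by auto
  ultimately show ?thesis
    by (simp only: integral_unique if_False) simp
qed

lemma integral_cos_times_sin:
  fixes L :: real and n m :: nat
  assumes L: "L > 0"
  shows "integral {-pi*L..pi*L} (\<lambda>x. cos (real n * x / L) * sin (real m * x / L)) = 0"
proof -
  have "cos (real n * x / L) * sin (real m * x / L) =
      sin (of_int (int n + int m) * x / L) / 2 - sin (of_int (int n - int m) * x / L) / 2" for x
    unfolding cos_times_sin by (simp add: diff_divide_distrib add_divide_distrib algebra_simps)
  moreover have "((\<lambda>x. sin (of_int (int n + int m) * x / L) / 2 - sin (of_int (int n - int m) * x / L) / 2)
     has_integral (0 / 2 - 0 / 2)) {-pi*L..pi*L}"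
    by (intro has_integral_diff has_integral_divide has_integral_sin_int_multiple L)
  ultimately show ?thesis by (simp add: integral_unique)
qed

lemma sums_integral_cos_series:
  fixes L :: real and b :: "nat \<Rightarrow> real" and \<phi> :: "real \<Rightarrow> real"
  assumes L: "L > 0" and b: "summable (\<lambda>n. \<bar>b n\<bar>)"
    and \<phi>: "continuous_on {-pi*L..pi*L} \<phi>" "\<And>x. \<bar>\<phi> x\<bar> \<le> 1"
  shows "(\<lambda>n. b n * integral {-pi*L..pi*L} (\<lambda>x. cos (real n * x / L) * \<phi> x)) sums
           integral {-pi*L..pi*L} (\<lambda>x. (\<Sum>n. b n * cos (real n * x / L)) * \<phi> x)"
proof -
  define S where "S = {-pi*L..pi*L}"
  define f where "f k x = (\<Sum>n<k. b n * cos (real n * x / L)) * \<phi> x" for k x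
  have bound: "\<bar>b n * cos (real n * x / L)\<bar> \<le> \<bar>b n\<bar>" for n x
    by (simp add: abs_mult mult_left_le)
  have integrable: "f k integrable_on S" for k
    unfolding f_def S_def using L
    by (intro integrable_continuous_interval continuous_intros \<phi>) auto
  have dominated: "norm (f k x) \<le> (\<Sum>n. \<bar>b n\<bar>)" for k x
  proof -
    have "\<bar>\<Sum>n<k. b n * cos (real n * x / L)\<bar> \<le> (\<Sum>n<k. \<bar>b n\<bar>)"
      by (rule order_trans[OF sum_abs sum_mono[OF bound]])
    also have "\<dots> \<le> (\<Sum>n. \<bar>b n\<bar>)"
      by (rule sum_le_suminf[OF b]) auto
    finally have "\<bar>\<Sum>n<k. b n * cos (real n * x / L)\<bar> * \<bar>\<phi> x\<bar> \<le> (\<Sum>n. \<bar>b n\<bar>) * 1"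
      using \<phi>(2)[of x] by (intro mult_mono) auto
    then show ?thesis
      unfolding f_def by (simp add: abs_mult)
  qed
  have "(\<lambda>k. f k x) \<longlonglongrightarrow> (\<Sum>n. b n * cos (real n * x / L)) * \<phi> x" for x
    unfolding f_def
    by (intro tendsto_mult_right summable_LIMSEQ summable_comparison_test'[OF b]) (simp add: bound)
  then have "(\<lambda>k. integral S (f k)) \<longlonglongrightarrow> integral S (\<lambda>x. (\<Sum>n. b n * cos (real n * x / L)) * \<phi> x)"
    by (intro dominated_convergence(2)[OF integrable _ dominated]) (auto simp: S_def)
  moreover have "integral S (f k) = (\<Sum>n<k. b n * integral S (\<lambda>x. cos (real n * x / L) * \<phi> x))" for k
  proof -
    have "integral S (f k) = (\<Sum>n<k. integral S (\<lambda>x. b n * (cos (real n * x / L) * \<phi> x)))"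
      unfolding f_def sum_distrib_right mult.assoc S_def using L
      by (intro integral_sum) (auto intro!: integrable_continuous_interval continuous_intros \<phi>(1)[simplified])
    then show ?thesis by simp
  qed
  ultimately show ?thesis
    unfolding sums_def S_def by simp
qed

lemma integral_cos_series:
  fixes L :: real and b :: "nat \<Rightarrow> real"
  assumes L: "L > 0" and b: "summable (\<lambda>n. \<bar>b n\<bar>)"
  shows "integral {-pi*L..pi*L} (\<lambda>x. \<Sum>n. b n * cos (real n * x / L)) = 2 * pi * L * b 0"
proof -
  have mean: "integral {-pi*L..pi*L} (\<lambda>x. cos (real n * x / L) * 1) = (if n = 0 then 2 * pi * L else 0)" for n
    using has_integral_cos_int_multiple[OF L, of "int n"] by (simp add: integral_unique)
  have "(\<lambda>n. b n * integral {-pi*L..pi*L} (\<lambda>x. cos (real n * x / L) * 1)) sums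
          integral {-pi*L..pi*L} (\<lambda>x. (\<Sum>n. b n * cos (real n * x / L)) * 1)"
    by (rule sums_integral_cos_series[OF L b]) auto
  then have "(\<lambda>n. if n = 0 then 2 * pi * L * b 0 else 0) sums
          integral {-pi*L..pi*L} (\<lambda>x. \<Sum>n. b n * cos (real n * x / L))"
    unfolding mean by (simp add: if_distrib mult.commute cong: if_cong)
  then show ?thesis
    using sums_single[of 0 "\<lambda>_. 2 * pi * L * b 0"] sums_unique2 by blast
qed

lemma cos_coeff_cos_series:
  fixes L :: real and b :: "nat \<Rightarrow> real"
  assumes L: "L > 0" and b: "summable (\<lambda>n. \<bar>b n\<bar>)" and "m \<ge> 1"
  shows "cos_coeff L (\<lambda>x. \<Sum>n. b n * cos (real n * x / L)) m = b m"
proof -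
  have "(\<lambda>n. b n * integral {-pi*L..pi*L} (\<lambda>x. cos (real n * x / L) * cos (real m * x / L))) sums
          integral {-pi*L..pi*L} (\<lambda>x. (\<Sum>n. b n * cos (real n * x / L)) * cos (real m * x / L))"
    using L by (intro sums_integral_cos_series[OF L b] continuous_intros) auto
  then have "(\<lambda>n. if n = m then pi * L * b m else 0) sums
          integral {-pi*L..pi*L} (\<lambda>x. (\<Sum>n. b n * cos (real n * x / L)) * cos (real m * x / L))"
    unfolding integral_cos_times_cos[OF L \<open>m \<ge> 1\<close>] by (simp add: if_distrib mult.commute cong: if_cong)
  then have "integral {-pi*L..pi*L} (\<lambda>x. (\<Sum>n. b n * cos (real n * x / L)) * cos (real m * x / L))
           = pi * L * b m"
    using sums_single[of m "\<lambda>_. pi * L * b m"] sums_unique2 by blast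
  then show ?thesis
    using L by (simp add: cos_coeff_def)
qed

lemma sin_coeff_cos_series:
  fixes L :: real and b :: "nat \<Rightarrow> real"
  assumes L: "L > 0" and b: "summable (\<lambda>n. \<bar>b n\<bar>)"
  shows "sin_coeff L (\<lambda>x. \<Sum>n. b n * cos (real n * x / L)) m = 0"
proof -
  have "(\<lambda>n. b n * integral {-pi*L..pi*L} (\<lambda>x. cos (real n * x / L) * sin (real m * x / L))) sums
          integral {-pi*L..pi*L} (\<lambda>x. (\<Sum>n. b n * cos (real n * x / L)) * sin (real m * x / L))"
    using L by (intro sums_integral_cos_series[OF L b] continuous_intros) auto
  then show ?thesis
    unfolding integral_cos_times_sin[OF L] sin_coeff_def by (simp add: sums_iff)
qed

lemma inv_op_cos_series:
  fixes L :: real and b :: "nat \<Rightarrow> real"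
  assumes L: "L > 0" and b: "summable (\<lambda>n. \<bar>b n\<bar>)"
  shows "inv_op L g \<alpha> (\<lambda>x. \<Sum>n. b n * cos (real n * x / L)) x =
           (\<Sum>n. if n = 0 then 0 else b n * cos (real n * x / L) / (g + \<alpha>\<^sup>2 * (real n)\<^sup>2 / L\<^sup>2))"
  unfolding inv_op_def sin_coeff_cos_series[OF L b]
  by (intro arg_cong[where f = suminf]) (simp add: fun_eq_iff cos_coeff_cos_series[OF L b])

lemma Gfun_minus_Gamma_fun_eq:
  fixes L x y :: real and h :: "complex \<Rightarrow> complex"
  assumes L: "L > 0"
    and h: "\<And>z. z \<noteq> 0 \<Longrightarrow> h z = sin (of_real (1 / (2 * L)) * z) / z"
    and z: "Complex x y \<noteq> 0" "cmod (Complex x y) < 2 * pi * L" and "y < 1"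
  shows "Gfun L x y - Gamma_fun x y
       = 1 / (4 * pi) * (ln 2 + ln ((cmod (h (Complex x y)))\<^sup>2) - ln (cosh ((y - 2) / L) - cos (x / L)))"
proof -
  define w where "w = of_real (1 / (2 * L)) * Complex x y"
  have w: "w = Complex (x / L / 2) (y / L / 2)"
    by (simp add: w_def complex_eq_iff)
  have "sin w \<noteq> 0"
  proof
    assume "sin w = 0"
    then obtain n :: int where n: "w = of_real (of_int n * pi)"
      by (auto simp: sin_eq_0)
    then have "Complex x y = of_real (2 * L * of_int n * pi)"
      using L by (simp add: w_def complex_eq_iff field_simps)
    then have "cmod (Complex x y) = \<bar>2 * L * of_int n * pi\<bar>"
      by (simp only: norm_of_real)
    then have "2 * L * \<bar>of_int n\<bar> * pi < 2 * pi * L"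
      using z(2) L by (simp add: abs_mult)
    then have "n = 0" using L by (simp add: mult.commute)
    then show False using \<open>sin w = 0\<close> n z(1) L by (simp add: w_def)
  qed
  define A where "A = cosh (y / L) - cos (x / L)"
  define B where "B = cosh ((y - 2) / L) - cos (x / L)"
  have r: "x\<^sup>2 + y\<^sup>2 = (cmod (Complex x y))\<^sup>2" by (simp add: cmod_power2)
  have A: "A = 2 * (x\<^sup>2 + y\<^sup>2) * (cmod (h (Complex x y)))\<^sup>2"
    unfolding A_def cosh_minus_cos_eq_norm_sin w[symmetric] r h[OF z(1)] w_def[symmetric]
    using z(1) by (simp add: norm_divide power_divide)
  have "0 < x\<^sup>2 + y\<^sup>2" using z(1) r by simp
  moreover have "0 < (cmod (h (Complex x y)))\<^sup>2"
    using \<open>sin w \<noteq> 0\<close> z(1) by (simp add: h w_def)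
  moreover have "0 < B"
    unfolding B_def using \<open>y < 1\<close> L by (intro cosh_minus_cos_pos) simp
  ultimately have lnAB: "ln (A / B) = ln 2 + ln (x\<^sup>2 + y\<^sup>2) + ln ((cmod (h (Complex x y)))\<^sup>2) - ln B"
    unfolding A by (simp add: ln_divide_pos ln_mult_pos del: distrib_left_numeral)
  have G: "Gfun L x y = 1 / (4 * pi) * ln (A / B)"
    unfolding Gfun_def A_def B_def by (metis minus_diff_eq minus_divide_divide)
  show ?thesis
    unfolding G Gamma_fun_def B_def[symmetric] lnAB by (simp add: algebra_simps)
qed

lemma regular_part_exists:
  fixes L :: real
  assumes L: "L > 0"
  shows "\<exists>H. is_regular_part L H"
proof -
  obtain h where holo: "h holomorphic_on UNIV" and h0: "h 0 = of_real (1 / (2 * L))"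
    and h: "\<And>z. z \<noteq> 0 \<Longrightarrow> h z = sin (of_real (1 / (2 * L)) * z) / z"
    using sin_div_removable[of "of_real (1 / (2 * L))"] by blast
  define H where "H p = 1 / (4 * pi) * (ln 2 + ln ((cmod (h (Complex (fst p) (snd p))))\<^sup>2)
                     - ln (cosh ((snd p - 2) / L) - cos (fst p / L)))" for p :: "real \<times> real"
  have cosh_deriv: "DERIV cosh t :> sinh t" for t :: real
    using has_field_derivative_cosh[OF DERIV_ident] by simp
  have "0 < cosh ((snd (0::real, 0::real) - 2) / L) - cos (fst (0::real, 0::real) / L)"
    using L by (intro cosh_minus_cos_pos) simp
  then have "(\<lambda>p::real \<times> real. ln (cosh ((snd p - 2) / L) - cos (fst p / L))) differentiable (at (0, 0))"
    by (intro differentiableI) (rule derivative_intros DERIV_compose_FDERIV[OF cosh_deriv] | assumption | use L in simp)+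
  moreover have "h 0 \<noteq> 0" using h0 L by simp
  ultimately have "H differentiable (at (0, 0))"
    unfolding H_def
    by (intro differentiable_mult differentiable_diff differentiable_add differentiable_const
          differentiable_ln_norm_squared_holomorphic holo)
  moreover have "H p = Gfun L (fst p) (snd p) - Gamma_fun (fst p) (snd p)"
    if "0 < norm p" "norm p < min 1 (2 * pi * L)" for p
  proof -
    obtain x y where p: "p = (x, y)" by (cases p)
    have "norm p = cmod (Complex x y)" by (simp add: p norm_Pair cmod_def)
    moreover have "\<bar>y\<bar> \<le> norm p" by (simp add: p norm_Pair real_le_rsqrt)
    ultimately show ?thesis
      using that Gfun_minus_Gamma_fun_eq[OF L h, of x y] by (auto simp: H_def p)
  qed
  moreover have "0 < min 1 (2 * pi * L)" using L by simp
  ultimately show ?thesis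
    unfolding is_regular_part_def by blast
qed

definition vortex_speed :: "real \<Rightarrow> real" where
  "vortex_speed L = - (1 / (4 * pi * L)) * (cosh (1 / L) / sinh (1 / L))"

lemma Gfun_minus_Gamma_fun_on_axis:
  fixes L t :: real
  assumes "L > 0" and "t \<noteq> 0" and "t \<noteq> 2"
  shows "Gfun L 0 t - Gamma_fun 0 t
       = 1 / (4 * pi) * (ln (cosh (t / L) - 1) - ln (t\<^sup>2)) - 1 / (4 * pi) * ln (cosh ((t - 2) / L) - 1)"
proof -
  have A: "cosh (t / L) - 1 > 0" and B: "cosh ((t - 2) / L) - 1 > 0"
    using cosh_minus_cos_pos[of "t / L" 0] cosh_minus_cos_pos[of "(t - 2) / L" 0] assms by auto
  have "Gfun L 0 t = 1 / (4 * pi) * ln ((1 - cosh (t / L)) / (1 - cosh ((t - 2) / L)))"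
    by (simp add: Gfun_def)
  also have "(1 - cosh (t / L)) / (1 - cosh ((t - 2) / L)) = (cosh (t / L) - 1) / (cosh ((t - 2) / L) - 1)"
    by (metis minus_diff_eq minus_divide_divide)
  also have "ln \<dots> = ln (cosh (t / L) - 1) - ln (cosh ((t - 2) / L) - 1)"
    using A B assms by (simp add: ln_div)
  finally show ?thesis
    by (simp add: Gamma_fun_def algebra_simps)
qed

lemma DERIV_image_vortex_term:
  fixes L :: real
  assumes L: "L > 0"
  shows "DERIV (\<lambda>y. 1 / (4 * pi) * ln (cosh ((y - 2) / L) - 1)) 0 :> vortex_speed L"
proof -
  have pos: "cosh ((0 - 2) / L) - 1 > 0"
    using cosh_minus_cos_pos[of "(0 - 2) / L" 0] L by simp
  have "DERIV (\<lambda>y. 1 / (4 * pi) * ln (cosh ((y - 2) / L) - 1)) 0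
          :> 1 / (4 * pi) * (sinh ((0 - 2) / L) * (1 / L) / (cosh ((0 - 2) / L) - 1))"
    using pos L by (auto intro!: derivative_eq_intros)
  moreover have "sinh ((0 - 2) / L) = - sinh (2 / L)" "cosh ((0 - 2) / L) = cosh (2 / L)"
    by (simp_all add: minus_divide_left[symmetric])
  moreover have "cosh (1 / L) / sinh (1 / L) = sinh (2 / L) / (cosh (2 / L) - 1)"
    using cosh_div_sinh_eq[of "1/L"] L by simp
  ultimately show ?thesis
    unfolding vortex_speed_def by (simp add: field_simps)
qed

lemma perp_grad_first_regular_part:
  fixes L :: real and H :: "real \<times> real \<Rightarrow> real"
  assumes L: "L > 0" and H: "is_regular_part L H"
  shows "perp_grad_first H = vortex_speed L"
proof -
  obtain e where "e > 0" and
    eq: "\<And>p. 0 < norm p \<Longrightarrow> norm p < e \<Longrightarrow> H p = Gfun L (fst p) (snd p) - Gamma_fun (fst p) (snd p)"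
    using H unfolding is_regular_part_def by blast
  define \<psi> where "\<psi> y = 1 / (4 * pi) * ln (cosh ((y - 2) / L) - 1)" for y
  define d where "d = deriv (\<lambda>y. H (0, y)) 0"
  have "((\<lambda>y. (0::real, y)) has_derivative (\<lambda>h. (0, h))) (at 0)"
    by (intro has_derivative_Pair has_derivative_const has_derivative_ident)
  then have "(\<lambda>y. (0::real, y)) differentiable (at 0)"
    by (rule differentiableI)
  then have "(\<lambda>y. H (0, y)) differentiable (at 0)"
    using H differentiable_compose[of H "\<lambda>y. (0, y)" 0] by (simp add: is_regular_part_def)
  then have "DERIV (\<lambda>y. H (0, y) + \<psi> y) 0 :> d + vortex_speed L"
    unfolding d_def \<psi>_def
    by (intro DERIV_add DERIV_image_vortex_term L) (simp add: DERIV_deriv_iff_real_differentiable)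
  moreover have "H (0, - y) + \<psi> (- y) = H (0, y) + \<psi> y" if "\<bar>y\<bar> < min e 1" for y
  proof (cases "y = 0")
    case False
    have axis: "H (0, t) + \<psi> t = 1 / (4 * pi) * (ln (cosh (t / L) - 1) - ln (t\<^sup>2))"
      if "t \<noteq> 0" "\<bar>t\<bar> < min e 1" for t
    proof -
      have "t \<noteq> 2" using that by auto
      then show ?thesis
        using that eq[of "(0, t)"] Gfun_minus_Gamma_fun_on_axis[OF L \<open>t \<noteq> 0\<close>]
        by (simp add: norm_Pair \<psi>_def)
    qed
    have "cosh (- y / L) = cosh (y / L)" "(- y)\<^sup>2 = y\<^sup>2"
      by (simp_all add: minus_divide_left[symmetric])
    then show ?thesis
      using axis[of y] axis[of "- y"] False that by (simp only: abs_minus) simp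
  qed simp
  ultimately have "d + vortex_speed L = 0"
    using DERIV_even_eq_0[of "\<lambda>y. H (0, y) + \<psi> y" _ "min e 1"] \<open>e > 0\<close> by simp
  then show ?thesis
    by (simp add: perp_grad_first_def d_def)
qed

lemma Gy1_eq:
  fixes L x :: real
  assumes L: "L > 0"
  shows "Gy1 L x = sinh (1/L) / (2 * pi * L * (cosh (1/L) - cos (x/L)))"
proof -
  define K where "K = cos (x/L) - cosh (1/L)"
  have K: "K < 0" using cosh_minus_cos_pos[of "1/L" "x/L"] L by (simp add: K_def)
  have shift: "cosh ((1 - 2)/L) = cosh (1/L)" "sinh ((1 - 2)/L) = - sinh (1/L)"
    by (simp_all add: minus_divide_left[symmetric])
  have "((\<lambda>y. (cos (x/L) - cosh (y/L)) / (cos (x/L) - cosh ((y - 2)/L))) has_real_derivative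
          (- sinh (1/L) / L * K - K * (sinh (1/L) / L)) / (K * K)) (at 1)"
    using K L by (auto intro!: derivative_eq_intros simp: K_def shift)
  moreover have "(cos (x/L) - cosh (1/L)) / (cos (x/L) - cosh ((1 - 2)/L)) = 1"
    using K by (simp add: K_def shift)
  ultimately have "((\<lambda>y. Gfun L x y) has_real_derivative
          1 / (4 * pi) * ((- sinh (1/L) / L * K - K * (sinh (1/L) / L)) / (K * K))) (at 1)"
    using K unfolding Gfun_def by (auto intro!: derivative_eq_intros simp: K_def)
  moreover have "1 / (4 * pi) * ((- sinh (1/L) / L * K - K * (sinh (1/L) / L)) / (K * K))
      = sinh (1/L) / (2 * pi * L * (cosh (1/L) - cos (x/L)))"
  proof -
    have "cosh (1/L) - cos (x/L) = - K" by (simp add: K_def)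
    then show ?thesis using K L by (simp only:) (simp add: field_simps)
  qed
  ultimately show ?thesis
    unfolding Gy1_def by (simp add: DERIV_imp_deriv)
qed

lemma chi_fun_vortex_speed:
  fixes L x :: real
  assumes L: "L > 0"
  shows "chi_fun L (vortex_speed L) x
     = (cosh (1/L) * cos (x/L) - 1) / (8 * pi\<^sup>2 * L\<^sup>2 * (cosh (1/L) - cos (x/L))\<^sup>2)"
proof -
  define D where "D = cosh (1/L) - cos (x/L)"
  have "D > 0" using cosh_minus_cos_pos[of "1/L"] L by (simp add: D_def)
  moreover have "sinh (1/L) > 0" using L by simp
  ultimately have "chi_fun L (vortex_speed L) x
      = ((sinh (1/L))\<^sup>2 - cosh (1/L) * D) / (8 * pi\<^sup>2 * L\<^sup>2 * D\<^sup>2)"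
    unfolding chi_fun_def vortex_speed_def Gy1_eq[OF L] D_def[symmetric]
    using L by (simp add: field_simps power2_eq_square)
  also have "(sinh (1/L))\<^sup>2 - cosh (1/L) * D = cosh (1/L) * cos (x/L) - 1"
    using cosh_square_eq[of "1/L"] by (simp add: D_def algebra_simps power2_eq_square)
  finally show ?thesis by (simp add: D_def)
qed

definition chi_coeff :: "real \<Rightarrow> nat \<Rightarrow> real" where
  "chi_coeff L n = real n * exp (- real n / L) / (4 * pi\<^sup>2 * L\<^sup>2)"

lemma sums_chi_coeff_cos:
  fixes L x :: real
  assumes L: "L > 0"
  shows "(\<lambda>n. chi_coeff L n * cos (real n * x / L)) sums chi_fun L (vortex_speed L) x"
proof -
  have "(\<lambda>n. real n * exp (- real n * (1/L)) * cos (real n * (x/L)) / (4 * pi\<^sup>2 * L\<^sup>2)) sums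
          ((cosh (1/L) * cos (x/L) - 1) / (2 * (cosh (1/L) - cos (x/L))\<^sup>2) / (4 * pi\<^sup>2 * L\<^sup>2))"
    using L by (intro sums_divide sums_nat_exp_cos) simp
  then show ?thesis
    unfolding chi_fun_vortex_speed[OF L] chi_coeff_def by (simp add: field_simps)
qed

lemma summable_abs_chi_coeff:
  assumes "L > 0"
  shows "summable (\<lambda>n. \<bar>chi_coeff L n\<bar>)"
proof -
  have "summable (\<lambda>n. chi_coeff L n * cos (real n * 0 / L))"
    using sums_chi_coeff_cos[OF assms] by (rule sums_summable)
  then show ?thesis by (simp add: chi_coeff_def)
qed

lemma summable_eta_star_terms:
  fixes L g \<alpha> x :: real
  assumes L: "L > 0" and g: "g > 0"
  shows "summable (\<lambda>n. real n / (g * L\<^sup>2 + \<alpha>\<^sup>2 * (real n)\<^sup>2) * exp (- real n / L) * cos (real n * x / L))"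
proof (rule summable_comparison_test')
  show "summable (\<lambda>n. \<bar>chi_coeff L n\<bar> * (4 * pi\<^sup>2 / g))"
    using summable_abs_chi_coeff[OF L] by (rule summable_mult2)
  fix n
  have denom_pos: "g * L\<^sup>2 + \<alpha>\<^sup>2 * (real n)\<^sup>2 > 0"
    using g L by (intro add_pos_nonneg) auto
  have "\<bar>real n / (g * L\<^sup>2 + \<alpha>\<^sup>2 * (real n)\<^sup>2) * exp (- real n / L) * cos (real n * x / L)\<bar>
      \<le> real n / (g * L\<^sup>2 + \<alpha>\<^sup>2 * (real n)\<^sup>2) * exp (- real n / L)"
    using denom_pos by (auto simp: abs_mult intro!: divide_right_mono mult_left_le)
  also have "\<dots> \<le> real n / (g * L\<^sup>2) * exp (- real n / L)"
    using g L denom_pos by (intro mult_right_mono divide_left_mono) auto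
  finally show "norm (real n / (g * L\<^sup>2 + \<alpha>\<^sup>2 * (real n)\<^sup>2) * exp (- real n / L) * cos (real n * x / L))
      \<le> \<bar>chi_coeff L n\<bar> * (4 * pi\<^sup>2 / g)"
    using g L by (simp add: chi_coeff_def field_simps)
qed

lemma eta_star_vortex_speed:
  fixes L g \<alpha> x :: real
  assumes L: "L > 0" and g: "g > 0"
  shows "eta_star L g \<alpha> (vortex_speed L) x =
          - (1 / (4 * pi\<^sup>2)) *
            (\<Sum>n. real (Suc n) / (g * L\<^sup>2 + \<alpha>\<^sup>2 * (real (Suc n))\<^sup>2)
                   * exp (- real (Suc n) / L) * cos (real (Suc n) * x / L))"
proof -
  define T where "T n = real n / (g * L\<^sup>2 + \<alpha>\<^sup>2 * (real n)\<^sup>2) * exp (- real n / L) * cos (real n * x / L)" for n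
  have T: "summable T" "T 0 = 0"
    unfolding T_def using L g by (rule summable_eta_star_terms) simp
  have chi: "chi_fun L (vortex_speed L) = (\<lambda>t. \<Sum>n. chi_coeff L n * cos (real n * t / L))"
    using sums_chi_coeff_cos[OF L] by (simp add: fun_eq_iff sums_iff)
  have "integral {-pi*L..pi*L} (chi_fun L (vortex_speed L)) = 0"
    unfolding chi integral_cos_series[OF L summable_abs_chi_coeff[OF L]] by (simp add: chi_coeff_def)
  then have "eta_star L g \<alpha> (vortex_speed L) x
      = - (\<Sum>n. if n = 0 then 0 else chi_coeff L n * cos (real n * x / L) / (g + \<alpha>\<^sup>2 * (real n)\<^sup>2 / L\<^sup>2))"
    unfolding eta_star_def by (simp add: chi inv_op_cos_series[OF L summable_abs_chi_coeff[OF L]])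
  also have "(\<lambda>n. if n = 0 then 0 else chi_coeff L n * cos (real n * x / L) / (g + \<alpha>\<^sup>2 * (real n)\<^sup>2 / L\<^sup>2))
      = (\<lambda>n. 1 / (4 * pi\<^sup>2) * T n)"
  proof -
    have "g * L\<^sup>2 + \<alpha>\<^sup>2 * (real n)\<^sup>2 > 0" for n
      using g L by (intro add_pos_nonneg) auto
    then show ?thesis
      using L by (simp add: fun_eq_iff chi_coeff_def T_def field_simps)
  qed
  also have "(\<Sum>n. 1 / (4 * pi\<^sup>2) * T n) = 1 / (4 * pi\<^sup>2) * (\<Sum>n. T (Suc n))"
    using suminf_mult[OF T(1), of "1 / (4 * pi\<^sup>2)"] suminf_split_head[OF T(1)] T(2) by simp
  finally show ?thesis by (simp add: T_def)
qed

theorem proposition6p2: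
  fixes L g \<alpha> :: real
  assumes "L > 0" and "g > 0" and "\<alpha>\<^sup>2 > 0"
  shows "(\<exists>H. is_regular_part L H) \<and>
    (\<forall>H. is_regular_part L H \<longrightarrow>
       perp_grad_first H = - (1 / (4 * pi * L)) * (cosh (1 / L) / sinh (1 / L)) \<and>
       (\<forall>x. eta_star L g \<alpha> (perp_grad_first H) x =
          - (1 / (4 * pi\<^sup>2)) *
            (\<Sum>n. real (Suc n) / (g * L\<^sup>2 + \<alpha>\<^sup>2 * (real (Suc n))\<^sup>2)
                   * exp (- real (Suc n) / L) * cos (real (Suc n) * x / L))))"
proof (intro conjI allI impI)
  show "\<exists>H. is_regular_part L H"
    using \<open>L > 0\<close> by (rule regular_part_exists)
  fix H
  assume "is_regular_part L H"
  with \<open>L > 0\<close> have c1: "perp_grad_first H = vortex_speed L"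
    by (rule perp_grad_first_regular_part)
  then show "perp_grad_first H = - (1 / (4 * pi * L)) * (cosh (1 / L) / sinh (1 / L))"
    by (simp add: vortex_speed_def)
  show "eta_star L g \<alpha> (perp_grad_first H) x =
          - (1 / (4 * pi\<^sup>2)) *
            (\<Sum>n. real (Suc n) / (g * L\<^sup>2 + \<alpha>\<^sup>2 * (real (Suc n))\<^sup>2)
                   * exp (- real (Suc n) / L) * cos (real (Suc n) * x / L))" for x
    unfolding c1 using \<open>L > 0\<close> \<open>g > 0\<close> by (rule eta_star_vortex_speed)
qed

end
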